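(* Let $\Sigma$ be a theory. For each $M \subseteq \mathcal{T}_Y$, $[M]_\Sigma = \bigcup\{[N]_\Sigma \mid N \text{ is a finite subset of } M\}$.
   Context: $Y$ is a non-empty finite set of attributes and $\mathcal{T}_Y = \{y^i \mid y \in Y, i \in \mathbb{Z}\}$. For $M \subseteq \mathcal{T}_Y$ and $j \in \mathbb{Z}$, $M + j = \{y^{i+j} \mid y^i \in M\}$. A formula is $A \Rightarrow B$ with $A,B$ finite subsets of $\mathcal{T}_Y$; $M \models A \Rightarrow B$ means that for every $i \in \mathbb{Z}$, $A+i \subseteq M$ implies $B+i \subseteq M$. A theory is a set of formulas; $\mathrm{Mod}(\Sigma)$ is the set of all $M \subseteq \mathcal{T}_Y$ in which every formula of $\Sigma$ is true. The semantic closure is $[M]_\Sigma = \bigcap\{N \in \mathrm{Mod}(\Sigma) \mid M \subseteq N\}$. *)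

theory Defs
  imports Main
begin

text \<open>Attributes are elements of a finite type 'y (non-empty automatically).
  The attribute term y^i is represented as the pair (y, i).\<close>

type_synonym 'y tterm = "'y \<times> int"

definition shift :: "'y tterm set \<Rightarrow> int \<Rightarrow> 'y tterm set" where
  "shift M j = {(y, i + j) | y i. (y, i) \<in> M}"

type_synonym 'y formula = "'y tterm set \<times> 'y tterm set"

definition is_formula :: "'y formula \<Rightarrow> bool" where
  "is_formula f \<longleftrightarrow> finite (fst f) \<and> finite (snd f)"

definition holds :: "'y tterm set \<Rightarrow> 'y formula \<Rightarrow> bool" where
  "holds M f \<longleftrightarrow> (\<forall>i::int. shift (fst f) i \<subseteq> M \<longrightarrow> shift (snd f) i \<subseteq> M)"

definition Mod :: "'y formula set \<Rightarrow> 'y tterm set set" where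
  "Mod \<Sigma> = {M. \<forall>f\<in>\<Sigma>. holds M f}"

definition sclosure :: "'y formula set \<Rightarrow> 'y tterm set \<Rightarrow> 'y tterm set" where
  "sclosure \<Sigma> M = \<Inter>{N \<in> Mod \<Sigma>. M \<subseteq> N}"

end

theory Submission
  imports Defs
begin

text \<open>The inclusion from right to left is monotonicity of the closure. Conversely, the union
  \<open>U\<close> of the closures of the finite subsets of \<open>M\<close> contains \<open>M\<close>, and it is a model of \<open>\<Sigma>\<close>:
  the family of these closures is directed, so the finitely many terms of a shifted premise
  \<open>A + i \<subseteq> U\<close> already lie in a single closure \<open>[N]\<^sub>\<Sigma>\<close>, which is a model and hence contains
  \<open>B + i\<close>. Thus \<open>[M]\<^sub>\<Sigma> \<subseteq> U\<close>.\<close>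

lemma finite_shift: "finite A \<Longrightarrow> finite (shift A i)"
proof -
  assume "finite A"
  moreover have "shift A i = (\<lambda>(y, k). (y, k + i)) ` A"
    unfolding shift_def by auto
  ultimately show ?thesis by simp
qed

lemma sclosure_in_Mod: "sclosure \<Sigma> N \<in> Mod \<Sigma>"
  unfolding sclosure_def Mod_def holds_def by blast

lemma sclosure_mono: "N \<subseteq> N' \<Longrightarrow> sclosure \<Sigma> N \<subseteq> sclosure \<Sigma> N'"
  unfolding sclosure_def by blast

lemma subset_sclosure: "N \<subseteq> sclosure \<Sigma> N"
  unfolding sclosure_def by blast

lemma sclosure_least: "M \<subseteq> K \<Longrightarrow> K \<in> Mod \<Sigma> \<Longrightarrow> sclosure \<Sigma> M \<subseteq> K"
  unfolding sclosure_def by blast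

lemma finite_subset_Union_sclosure_finite:
  assumes "finite F" "F \<subseteq> \<Union>{sclosure \<Sigma> N | N. finite N \<and> N \<subseteq> M}"
  obtains N where "finite N" "N \<subseteq> M" "F \<subseteq> sclosure \<Sigma> N"
  using assms
proof (induction F arbitrary: thesis rule: finite_induct)
  case empty
  then show ?case by blast
next
  case (insert x F)
  obtain N1 where N1: "finite N1" "N1 \<subseteq> M" "F \<subseteq> sclosure \<Sigma> N1"
    using insert.IH insert.prems(2) by blast
  obtain N2 where N2: "finite N2" "N2 \<subseteq> M" "x \<in> sclosure \<Sigma> N2"
    using insert.prems(2) by blast
  have "insert x F \<subseteq> sclosure \<Sigma> (N1 \<union> N2)"
    using N1(3) N2(3) sclosure_mono[of N1 "N1 \<union> N2"] sclosure_mono[of N2 "N1 \<union> N2"] by blast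
  then show ?case
    using insert.prems(1) N1 N2 by blast
qed

lemma subset_Union_sclosure_finite: "M \<subseteq> \<Union>{sclosure \<Sigma> N | N. finite N \<and> N \<subseteq> M}"
proof
  fix x assume "x \<in> M"
  then have "sclosure \<Sigma> {x} \<in> {sclosure \<Sigma> N | N. finite N \<and> N \<subseteq> M}" by auto
  moreover have "x \<in> sclosure \<Sigma> {x}" using subset_sclosure by blast
  ultimately show "x \<in> \<Union>{sclosure \<Sigma> N | N. finite N \<and> N \<subseteq> M}" by blast
qed

lemma Union_sclosure_finite_in_Mod:
  assumes "\<forall>f\<in>\<Sigma>. is_formula f"
  shows "\<Union>{sclosure \<Sigma> N | N. finite N \<and> N \<subseteq> M} \<in> Mod \<Sigma>"
  unfolding Mod_def holds_def
proof (intro CollectI ballI allI impI)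
  let ?U = "\<Union>{sclosure \<Sigma> N | N. finite N \<and> N \<subseteq> M}"
  fix f i assume f: "f \<in> \<Sigma>" and premise: "shift (fst f) i \<subseteq> ?U"
  have "finite (shift (fst f) i)"
    using assms f finite_shift unfolding is_formula_def by blast
  then obtain N where N: "finite N" "N \<subseteq> M" "shift (fst f) i \<subseteq> sclosure \<Sigma> N"
    using finite_subset_Union_sclosure_finite premise by blast
  then have "shift (snd f) i \<subseteq> sclosure \<Sigma> N"
    using sclosure_in_Mod[of \<Sigma> N] f unfolding Mod_def holds_def by blast
  then show "shift (snd f) i \<subseteq> ?U"
    using N(1,2) by blast
qed

theorem theorem2:
  fixes \<Sigma> :: "('y::finite) formula set" and M :: "'y tterm set"
  assumes "\<forall>f\<in>\<Sigma>. is_formula f"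
  shows "sclosure \<Sigma> M = \<Union>{sclosure \<Sigma> N | N. finite N \<and> N \<subseteq> M}"
proof
  show "sclosure \<Sigma> M \<subseteq> \<Union>{sclosure \<Sigma> N | N. finite N \<and> N \<subseteq> M}"
    using sclosure_least[OF subset_Union_sclosure_finite Union_sclosure_finite_in_Mod[OF assms]] .
  show "\<Union>{sclosure \<Sigma> N | N. finite N \<and> N \<subseteq> M} \<subseteq> sclosure \<Sigma> M"
    using sclosure_mono by blast
qed

end
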